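(* Let $R$ be a finite chain ring with maximal ideal $\langle\gamma\rangle$ where $\gamma$ has odd nilpotency index $e$, and residue field $\mathbb F_q$. Then for every positive integer $n$ with $\gcd(n,q)=1$ there is no self-dual cyclic code of length $n$ over $R$.
   Context: A finite chain ring is a finite commutative local ring whose ideals are linearly ordered; its maximal ideal is generated by a nilpotent $\gamma$ of nilpotency index $e$, with residue field $R/\langle\gamma\rangle$. A code of length $n$ is an $R$-submodule of $R^n$; cyclic means closed under cyclic shift; self-dual means $C=C^\perp$ for the standard inner product $[u,v]=\sum u_iv_i$. *)

theory Defs
  imports Main
begin

definition ring_ideal :: "'a::comm_ring_1 set \<Rightarrow> bool" where
  "ring_ideal I \<longleftrightarrow> 0 \<in> I \<and> (\<forall>x\<in>I. \<forall>y\<in>I. x + y \<in> I) \<and> (\<forall>r x. x \<in> I \<longrightarrow> r * x \<in> I)"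

definition principal_ideal :: "'a::comm_ring_1 \<Rightarrow> 'a set" where
  "principal_ideal g = {r * g | r. True}"

definition maximal_ideal :: "'a::comm_ring_1 set \<Rightarrow> bool" where
  "maximal_ideal I \<longleftrightarrow> ring_ideal I \<and> I \<noteq> UNIV \<and>
     (\<forall>J. ring_ideal J \<and> I \<subseteq> J \<longrightarrow> J = I \<or> J = UNIV)"

definition local_ring :: "'a::comm_ring_1 itself \<Rightarrow> bool" where
  "local_ring _ \<longleftrightarrow> (\<exists>!I::'a set. maximal_ideal I)"

definition finite_chain_ring :: "'a::comm_ring_1 itself \<Rightarrow> bool" where
  "finite_chain_ring T \<longleftrightarrow> finite (UNIV :: 'a set) \<and> local_ring T \<and>
     (\<forall>I J :: 'a set. ring_ideal I \<and> ring_ideal J \<longrightarrow> I \<subseteq> J \<or> J \<subseteq> I)"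

definition nilpotency_index :: "'a::comm_ring_1 \<Rightarrow> nat \<Rightarrow> bool" where
  "nilpotency_index g e \<longleftrightarrow> g ^ e = 0 \<and> (\<forall>k<e. g ^ k \<noteq> 0)"

definition quotient_card :: "'a::comm_ring_1 set \<Rightarrow> nat" where
  "quotient_card M = card ((\<lambda>x. (\<lambda>m. x + m) ` M) ` (UNIV :: 'a set))"

definition vecs :: "nat \<Rightarrow> (nat \<Rightarrow> 'a::comm_ring_1) set" where
  "vecs n = {v. \<forall>i\<ge>n. v i = 0}"

definition linear_code :: "nat \<Rightarrow> (nat \<Rightarrow> 'a::comm_ring_1) set \<Rightarrow> bool" where
  "linear_code n C \<longleftrightarrow> C \<subseteq> vecs n \<and> (\<lambda>_. 0) \<in> C \<and>
     (\<forall>u\<in>C. \<forall>v\<in>C. (\<lambda>i. u i + v i) \<in> C) \<and>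
     (\<forall>r. \<forall>v\<in>C. (\<lambda>i. r * v i) \<in> C)"

definition cyclic_shift :: "nat \<Rightarrow> (nat \<Rightarrow> 'a::comm_ring_1) \<Rightarrow> nat \<Rightarrow> 'a" where
  "cyclic_shift n v = (\<lambda>i. if i < n then v ((i + n - 1) mod n) else 0)"

definition cyclic_code :: "nat \<Rightarrow> (nat \<Rightarrow> 'a::comm_ring_1) set \<Rightarrow> bool" where
  "cyclic_code n C \<longleftrightarrow> linear_code n C \<and> (\<forall>v\<in>C. cyclic_shift n v \<in> C)"

definition inner_prod :: "nat \<Rightarrow> (nat \<Rightarrow> 'a::comm_ring_1) \<Rightarrow> (nat \<Rightarrow> 'a) \<Rightarrow> 'a" where
  "inner_prod n u v = (\<Sum>i<n. u i * v i)"

definition dual_code :: "nat \<Rightarrow> (nat \<Rightarrow> 'a::comm_ring_1) set \<Rightarrow> (nat \<Rightarrow> 'a) set" where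
  "dual_code n C = {v \<in> vecs n. \<forall>u\<in>C. inner_prod n u v = 0}"

definition self_dual :: "nat \<Rightarrow> (nat \<Rightarrow> 'a::comm_ring_1) set \<Rightarrow> bool" where
  "self_dual n C \<longleftrightarrow> C = dual_code n C"

end

theory Submission
  imports Defs "HOL-Number_Theory.Cong"
begin

text \<open>Summing the coordinates of the codewords maps a cyclic code \<open>C\<close> onto an ideal \<open>S\<close> of \<open>R\<close>.
  Because \<open>C\<close> is cyclic, the sum of all cyclic shifts of a codeword is the constant word with
  entry its coordinate sum, and this constant word lies in \<open>C\<close>; pairing such words shows that
  self-duality forces \<open>S\<close> to annihilate itself. Conversely, if \<open>a\<close> annihilates \<open>S\<close>, the constant
  word \<open>(a, \<dots>, a)\<close> lies in \<open>C\<^sup>\<bottom> = C\<close>, so \<open>n a \<in> S\<close>; since \<open>n\<close> is prime to \<open>q\<close> and \<open>q \<cdot> 1\<close> lies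
  in the maximal ideal, \<open>n\<close> is a unit and \<open>a \<in> S\<close>. Thus \<open>S\<close> equals its annihilator. In a chain
  ring the ideals are the powers \<open>\<langle>\<gamma>\<^sup>i\<rangle>\<close> with annihilator \<open>\<langle>\<gamma>\<^sup>e\<^sup>-\<^sup>i\<rangle>\<close>, so this needs \<open>e = 2i\<close>,
  impossible for odd \<open>e\<close>.\<close>

definition annihilator :: "'a::comm_ring_1 set \<Rightarrow> 'a set" where
  "annihilator S = {a. \<forall>s\<in>S. a * s = 0}"

lemma ring_idealD:
  assumes "ring_ideal I"
  shows ring_ideal_zero: "0 \<in> I"
    and ring_ideal_add: "x \<in> I \<Longrightarrow> y \<in> I \<Longrightarrow> x + y \<in> I"
    and ring_ideal_mult: "x \<in> I \<Longrightarrow> r * x \<in> I"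
  using assms unfolding ring_ideal_def by blast+

lemma ring_ideal_uminus: "ring_ideal I \<Longrightarrow> x \<in> I \<Longrightarrow> - x \<in> I"
  using ring_ideal_mult[of I x "- 1"] by simp

lemma ring_ideal_diff: "ring_ideal I \<Longrightarrow> x \<in> I \<Longrightarrow> y \<in> I \<Longrightarrow> x - y \<in> I"
  using ring_ideal_add[of I x "- y"] ring_ideal_uminus[of I y] by simp

lemma ring_ideal_sum:
  assumes "ring_ideal I" and "\<And>x. x \<in> A \<Longrightarrow> f x \<in> I"
  shows "sum f A \<in> I"
  using assms(2)
  by (induction A rule: infinite_finite_induct)
    (auto intro: ring_ideal_zero[OF assms(1)] ring_ideal_add[OF assms(1)])

lemma ring_ideal_UNIV_iff_one: "ring_ideal I \<Longrightarrow> I = UNIV \<longleftrightarrow> 1 \<in> I"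
  using ring_ideal_mult[of I 1] by auto

lemma mult_mem_principal_ideal: "r * g \<in> principal_ideal g"
  unfolding principal_ideal_def by blast

lemma mem_principal_ideal_self: "g \<in> principal_ideal g"
  using mult_mem_principal_ideal[of 1 g] by simp

lemma mem_principal_ideal_iff: "x \<in> principal_ideal g \<longleftrightarrow> (\<exists>r. x = r * g)"
  unfolding principal_ideal_def by blast

lemma ring_ideal_principal_ideal: "ring_ideal (principal_ideal g)"
  unfolding ring_ideal_def Ball_def mem_principal_ideal_iff
  by (metis mult_zero_left distrib_right mult.assoc)

lemma unit_if_not_in_maximal_principal_ideal:
  fixes r g :: "'a::comm_ring_1"
  assumes chain: "\<forall>I J :: 'a set. ring_ideal I \<and> ring_ideal J \<longrightarrow> I \<subseteq> J \<or> J \<subseteq> I"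
    and max: "maximal_ideal (principal_ideal g)"
    and r: "r \<notin> principal_ideal g"
  shows "\<exists>u. u * r = 1"
proof -
  have "principal_ideal g \<subseteq> principal_ideal r"
    using chain ring_ideal_principal_ideal r mem_principal_ideal_self by blast
  then have "principal_ideal r = UNIV"
    using max ring_ideal_principal_ideal r mem_principal_ideal_self
    unfolding maximal_ideal_def by blast
  then show ?thesis
    using mem_principal_ideal_iff[of 1 r] by (metis UNIV_I)
qed

text \<open>With \<open>e = 2m + 1\<close>, the element \<open>\<gamma>\<^sup>m\<close> would have to lie in \<open>S\<close> and hence square to zero.\<close>

lemma chain_ring_odd_index_no_self_annihilating_ideal:
  fixes \<gamma> :: "'a::comm_ring_1" and S :: "'a set"
  assumes chain: "\<forall>I J :: 'a set. ring_ideal I \<and> ring_ideal J \<longrightarrow> I \<subseteq> J \<or> J \<subseteq> I"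
    and max: "maximal_ideal (principal_ideal \<gamma>)"
    and zero: "\<gamma> ^ (2 * m + 1) = 0" and nonzero: "\<gamma> ^ (2 * m) \<noteq> 0"
    and S: "ring_ideal S"
  shows "S \<noteq> annihilator S"
proof
  assume S_ann: "S = annihilator S"
  have "\<gamma> ^ m \<in> S"
  proof (cases "\<gamma> ^ m \<in> annihilator S")
    case True
    then show ?thesis using S_ann by simp
  next
    case False
    then obtain s where s: "s \<in> S" "\<gamma> ^ m * s \<noteq> 0"
      unfolding annihilator_def by blast
    show ?thesis
    proof (cases "principal_ideal (\<gamma> ^ m) \<subseteq> S")
      case True
      then show ?thesis using mem_principal_ideal_self by blast
    next
      case False
      then have "S \<subseteq> principal_ideal (\<gamma> ^ m)"
        using chain ring_ideal_principal_ideal S by blast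
      then obtain r where r: "s = r * \<gamma> ^ m"
        using s(1) mem_principal_ideal_iff by blast
      have "r \<notin> principal_ideal \<gamma>"
      proof
        assume "r \<in> principal_ideal \<gamma>"
        then obtain t where "r = t * \<gamma>" using mem_principal_ideal_iff by blast
        then have "\<gamma> ^ m * s = t * (\<gamma> * (\<gamma> ^ m * \<gamma> ^ m))"
          using r by (simp add: ac_simps)
        also have "\<dots> = t * \<gamma> ^ (2 * m + 1)"
          by (simp add: power_add mult_2)
        finally show False using s(2) zero by simp
      qed
      then obtain u where "u * r = 1"
        using unit_if_not_in_maximal_principal_ideal[OF chain max] by blast
      then have "\<gamma> ^ m = u * s" using r by (simp add: mult.assoc[symmetric])
      then show ?thesis using ring_ideal_mult[OF S s(1)] by simp
    qed
  qed
  then have "\<gamma> ^ m * \<gamma> ^ m = 0" using S_ann unfolding annihilator_def by blast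
  with nonzero show False by (simp add: mult_2 power_add)
qed

lemma coset_eq_iff:
  assumes M: "ring_ideal M"
  shows "(\<lambda>m. x + m) ` M = (\<lambda>m. y + m) ` M \<longleftrightarrow> x - y \<in> M"
proof
  assume "(\<lambda>m. x + m) ` M = (\<lambda>m. y + m) ` M"
  then have "x + 0 \<in> (\<lambda>m. y + m) ` M" using ring_ideal_zero[OF M] by blast
  then show "x - y \<in> M" by auto
next
  assume d: "x - y \<in> M"
  show "(\<lambda>m. x + m) ` M = (\<lambda>m. y + m) ` M"
  proof (intro equalityI image_subsetI)
    fix m assume "m \<in> M"
    then have "(x - y) + m \<in> M" by (rule ring_ideal_add[OF M d])
    then show "x + m \<in> (\<lambda>m. y + m) ` M" by (rule rev_image_eqI) simp
  next
    fix m assume "m \<in> M"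
    then have "m - (x - y) \<in> M" by (rule ring_ideal_diff[OF M _ d])
    then show "y + m \<in> (\<lambda>m. x + m) ` M" by (rule rev_image_eqI) simp
  qed
qed

text \<open>Adding \<open>1\<close> permutes the \<open>q\<close> cosets of \<open>M\<close>; comparing the sum of chosen representatives before
  and after the permutation gives \<open>q \<cdot> 1 \<in> M\<close>.\<close>

lemma of_nat_quotient_card_mem:
  fixes M :: "'a::comm_ring_1 set"
  assumes fin: "finite (UNIV :: 'a set)" and M: "ring_ideal M"
  shows "of_nat (quotient_card M) \<in> M"
proof -
  define coset where "coset x = (\<lambda>m. x + m) ` M" for x :: 'a
  define Q where "Q = range coset"
  define rep where "rep c = (SOME x. coset x = c)" for c
  define succ where "succ c = coset (rep c + 1)" for c
  have card_Q: "quotient_card M = card Q" unfolding Q_def coset_def quotient_card_def ..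
  have "finite Q" unfolding Q_def using fin by simp
  have coset_rep: "coset (rep c) = c" if "c \<in> Q" for c
    using that unfolding Q_def rep_def by (metis (mono_tags) imageE someI_ex)
  have coset_eq: "coset x = coset y \<longleftrightarrow> x - y \<in> M" for x y
    unfolding coset_def using coset_eq_iff[OF M] .
  have succ_Q: "succ ` Q \<subseteq> Q" unfolding succ_def Q_def by auto
  have "inj_on succ Q"
  proof
    fix c d assume c: "c \<in> Q" and d: "d \<in> Q" and "succ c = succ d"
    then have "coset (rep c) = coset (rep d)" by (simp add: succ_def coset_eq)
    then show "c = d" using coset_rep c d by simp
  qed
  have "(\<Sum>c\<in>Q. rep (succ c)) = (\<Sum>c\<in>succ ` Q. rep c)"
    using sum.reindex[OF \<open>inj_on succ Q\<close>, of rep] by simp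
  also have "succ ` Q = Q"
    by (rule endo_inj_surj[OF \<open>finite Q\<close> succ_Q \<open>inj_on succ Q\<close>])
  finally have "(\<Sum>c\<in>Q. rep (succ c) - (rep c + 1)) = - of_nat (card Q)"
    by (simp add: sum_subtractf sum.distrib)
  moreover have "(\<Sum>c\<in>Q. rep (succ c) - (rep c + 1)) \<in> M"
  proof (rule ring_ideal_sum[OF M])
    fix c assume "c \<in> Q"
    then have "coset (rep (succ c)) = coset (rep c + 1)"
      using coset_rep succ_Q unfolding succ_def by auto
    then show "rep (succ c) - (rep c + 1) \<in> M" unfolding coset_eq .
  qed
  ultimately have "- of_nat (card Q) \<in> M" by simp
  then show ?thesis using ring_ideal_uminus[OF M] card_Q by fastforce
qed

lemma of_nat_unit_if_coprime_quotient_card: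
  fixes \<gamma> :: "'a::comm_ring_1"
  assumes fin: "finite (UNIV :: 'a set)"
    and chain: "\<forall>I J :: 'a set. ring_ideal I \<and> ring_ideal J \<longrightarrow> I \<subseteq> J \<or> J \<subseteq> I"
    and max: "maximal_ideal (principal_ideal \<gamma>)"
    and coprime: "coprime n (quotient_card (principal_ideal \<gamma>))"
  shows "\<exists>u. u * (of_nat n :: 'a) = 1"
proof (rule unit_if_not_in_maximal_principal_ideal[OF chain max], rule notI)
  let ?M = "principal_ideal \<gamma>" and ?q = "quotient_card (principal_ideal \<gamma>)"
  have M: "ring_ideal ?M" by (rule ring_ideal_principal_ideal)
  assume "(of_nat n :: 'a) \<in> ?M"
  moreover have "(of_nat ?q :: 'a) \<in> ?M" using of_nat_quotient_card_mem[OF fin M] .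
  moreover obtain u v where "u * int n + v * int ?q = 1"
    using coprime bezout_int[of "int n" "int ?q"] by (metis coprime_imp_gcd_eq_1 coprime_int_iff)
  then have "(of_int u * of_nat n + of_int v * of_nat ?q :: 'a) = 1"
    by (metis of_int_1 of_int_add of_int_mult of_int_of_nat_eq)
  ultimately have "(1 :: 'a) \<in> ?M"
    using ring_ideal_add[OF M ring_ideal_mult[OF M] ring_ideal_mult[OF M]] by metis
  then show False
    using max ring_ideal_UNIV_iff_one[OF M] unfolding maximal_ideal_def by blast
qed

lemma cyclic_shift_power_apply:
  assumes "0 < n" and "v \<in> vecs n" and "i < n"
  shows "(cyclic_shift n ^^ k) v i = v ((i + k * (n - 1)) mod n)"
  using assms(3)
proof (induction k arbitrary: i)
  case (Suc k)
  have "(cyclic_shift n ^^ Suc k) v i = (cyclic_shift n ^^ k) v ((i + n - 1) mod n)"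
    using Suc.prems by (simp add: cyclic_shift_def)
  also have "\<dots> = v (((i + n - 1) mod n + k * (n - 1)) mod n)"
    using Suc.IH \<open>0 < n\<close> by simp
  also have "((i + n - 1) mod n + k * (n - 1)) mod n = (i + Suc k * (n - 1)) mod n"
    using \<open>0 < n\<close> by (simp add: mod_add_left_eq add.assoc)
  finally show ?case .
qed simp

lemma cyclic_code_shift_power_mem: "cyclic_code n C \<Longrightarrow> v \<in> C \<Longrightarrow> (cyclic_shift n ^^ k) v \<in> C"
  by (induction k) (auto simp: cyclic_code_def)

lemma linear_code_sum_mem:
  assumes "linear_code n C" and "\<And>k. k \<in> A \<Longrightarrow> f k \<in> C"
  shows "(\<lambda>i. \<Sum>k\<in>A. f k i) \<in> C"
  using assms(2)
proof (induction A rule: infinite_finite_induct)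
  case (insert k A)
  then have "(\<lambda>i. f k i + (\<Sum>k\<in>A. f k i)) \<in> C"
    using assms(1) unfolding linear_code_def by simp
  with insert show ?case by simp
qed (use assms(1) in \<open>simp_all add: linear_code_def\<close>)

text \<open>Since \<open>k (n - 1) \<equiv> -k (mod n)\<close>, the indices \<open>i + k (n - 1)\<close> for \<open>k < n\<close> run through all residues.\<close>

lemma sum_rotated_indices:
  fixes v :: "nat \<Rightarrow> 'a::comm_monoid_add"
  assumes "i < n"
  shows "(\<Sum>k<n. v ((i + k * (n - 1)) mod n)) = (\<Sum>j<n. v j)"
proof -
  define rot where "rot k = (i + k * (n - 1)) mod n" for k
  have "inj_on rot {..<n}"
  proof
    fix k l assume "k \<in> {..<n}" "l \<in> {..<n}" "rot k = rot l"
    then have "[k * (n - 1) = l * (n - 1)] (mod n)"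
      unfolding rot_def by (simp add: cong_def[symmetric] cong_add_lcancel_nat)
    moreover have "coprime (n - 1) n" using assms by (intro coprime_diff_one_left_nat) simp
    ultimately have "[k = l] (mod n)"
      using cong_mult_rcancel_nat by blast
    then show "k = l"
      using \<open>k \<in> {..<n}\<close> \<open>l \<in> {..<n}\<close> by (simp add: cong_less_modulus_unique_nat)
  qed
  moreover have "rot ` {..<n} \<subseteq> {..<n}"
    using assms unfolding rot_def by auto
  ultimately have "rot ` {..<n} = {..<n}"
    by (intro endo_inj_surj) simp_all
  with sum.reindex[OF \<open>inj_on rot {..<n}\<close>, of v] show ?thesis
    unfolding rot_def by simp
qed

lemma cyclic_code_constant_word_mem:
  assumes C: "cyclic_code n C" and "0 < n" and v: "v \<in> C"
  shows "(\<lambda>i. if i < n then \<Sum>j<n. v j else 0) \<in> C"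
proof -
  have lin: "linear_code n C" using C by (simp add: cyclic_code_def)
  have shifts_C: "(cyclic_shift n ^^ k) v \<in> C" for k
    using cyclic_code_shift_power_mem[OF C v] .
  then have shifts_vecs: "(cyclic_shift n ^^ k) v \<in> vecs n" for k
    using lin by (auto simp: linear_code_def)
  have "v \<in> vecs n" using shifts_vecs[of 0] by simp
  have "(\<Sum>k<n. (cyclic_shift n ^^ k) v i) = (if i < n then \<Sum>j<n. v j else 0)" for i
  proof (cases "i < n")
    case True
    then show ?thesis
      using cyclic_shift_power_apply[OF \<open>0 < n\<close> \<open>v \<in> vecs n\<close> True] sum_rotated_indices[OF True, of v]
      by simp
  qed (use shifts_vecs in \<open>simp add: vecs_def\<close>)
  moreover have "(\<lambda>i. \<Sum>k<n. (cyclic_shift n ^^ k) v i) \<in> C"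
    by (rule linear_code_sum_mem[OF lin]) (rule shifts_C)
  ultimately show ?thesis by simp
qed

definition coordinate_sums :: "nat \<Rightarrow> (nat \<Rightarrow> 'a::comm_ring_1) set \<Rightarrow> 'a set" where
  "coordinate_sums n C = (\<lambda>v. \<Sum>j<n. v j) ` C"

lemma ring_ideal_coordinate_sums:
  assumes "linear_code n C"
  shows "ring_ideal (coordinate_sums n C)"
  unfolding ring_ideal_def coordinate_sums_def
proof (intro conjI ballI allI impI)
  show "0 \<in> (\<lambda>v. \<Sum>j<n. v j) ` C"
    using assms by (force simp: linear_code_def)
next
  fix x y assume "x \<in> (\<lambda>v. \<Sum>j<n. v j) ` C" "y \<in> (\<lambda>v. \<Sum>j<n. v j) ` C"
  then obtain u v where "u \<in> C" "v \<in> C" "x = (\<Sum>j<n. u j)" "y = (\<Sum>j<n. v j)" by blast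
  moreover from this have "(\<lambda>i. u i + v i) \<in> C" using assms by (simp add: linear_code_def)
  ultimately show "x + y \<in> (\<lambda>v. \<Sum>j<n. v j) ` C"
    by (force simp: sum.distrib)
next
  fix r x assume "x \<in> (\<lambda>v. \<Sum>j<n. v j) ` C"
  then obtain u where "u \<in> C" "x = (\<Sum>j<n. u j)" by blast
  moreover from this have "(\<lambda>i. r * u i) \<in> C" using assms by (simp add: linear_code_def)
  ultimately show "r * x \<in> (\<lambda>v. \<Sum>j<n. v j) ` C"
    by (force simp: sum_distrib_left)
qed

lemma inner_prod_constant_word:
  "inner_prod n u (\<lambda>i. if i < n then a else 0) = (\<Sum>j<n. u j) * a"
  unfolding inner_prod_def by (simp add: sum_distrib_right)

lemma self_dual_cyclic_code_coordinate_sums: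
  fixes C :: "(nat \<Rightarrow> 'a::comm_ring_1) set" and w :: 'a
  assumes C: "cyclic_code n C" and dual: "C = dual_code n C" and "0 < n"
    and unit: "w * of_nat n = 1"
  shows "coordinate_sums n C = annihilator (coordinate_sums n C)"
proof (intro equalityI subsetI)
  fix s assume "s \<in> coordinate_sums n C"
  then obtain u where u: "u \<in> C" "s = (\<Sum>j<n. u j)" unfolding coordinate_sums_def by blast
  show "s \<in> annihilator (coordinate_sums n C)"
    unfolding annihilator_def mem_Collect_eq
  proof
    fix t assume "t \<in> coordinate_sums n C"
    then obtain v where v: "v \<in> C" "t = (\<Sum>j<n. v j)" unfolding coordinate_sums_def by blast
    then have "(\<lambda>i. if i < n then t else 0) \<in> dual_code n C"
      using cyclic_code_constant_word_mem[OF C \<open>0 < n\<close>] dual by auto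
    then have "inner_prod n u (\<lambda>i. if i < n then t else 0) = 0"
      using u(1) unfolding dual_code_def by blast
    then show "s * t = 0" using u(2) by (simp add: inner_prod_constant_word)
  qed
next
  fix a assume a: "a \<in> annihilator (coordinate_sums n C)"
  have "inner_prod n u (\<lambda>i. if i < n then a else 0) = 0" if "u \<in> C" for u
    using a that unfolding annihilator_def coordinate_sums_def
    by (simp add: inner_prod_constant_word mult.commute)
  then have "(\<lambda>i. if i < n then a else 0) \<in> C"
    using dual unfolding dual_code_def vecs_def by auto
  then have "of_nat n * a \<in> coordinate_sums n C"
    unfolding coordinate_sums_def by (rule rev_image_eqI) simp
  then have "w * (of_nat n * a) \<in> coordinate_sums n C"
    using ring_ideal_mult ring_ideal_coordinate_sums C unfolding cyclic_code_def by blast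
  then show "a \<in> coordinate_sums n C"
    using unit by (simp add: mult.assoc[symmetric])
qed

theorem mainTheorem16:
  fixes \<gamma> :: "'a::comm_ring_1" and e q n :: nat
  assumes "finite_chain_ring TYPE('a)"
    and "maximal_ideal (principal_ideal \<gamma>)"
    and "nilpotency_index \<gamma> e"
    and "odd e"
    and "q = quotient_card (principal_ideal \<gamma>)"
    and "n > 0"
    and "coprime n q"
  shows "\<not> (\<exists>C :: (nat \<Rightarrow> 'a) set. cyclic_code n C \<and> self_dual n C)"
proof
  assume "\<exists>C :: (nat \<Rightarrow> 'a) set. cyclic_code n C \<and> self_dual n C"
  then obtain C :: "(nat \<Rightarrow> 'a) set" where C: "cyclic_code n C" and dual: "C = dual_code n C"
    unfolding self_dual_def by blast
  have fin: "finite (UNIV :: 'a set)"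
    and chain: "\<forall>I J :: 'a set. ring_ideal I \<and> ring_ideal J \<longrightarrow> I \<subseteq> J \<or> J \<subseteq> I"
    using assms(1) unfolding finite_chain_ring_def by auto
  obtain m where "e = 2 * m + 1" using \<open>odd e\<close> by (rule oddE)
  then have "\<gamma> ^ (2 * m + 1) = 0" "\<gamma> ^ (2 * m) \<noteq> 0"
    using assms(3) unfolding nilpotency_index_def by auto
  moreover obtain w where "w * (of_nat n :: 'a) = 1"
    using of_nat_unit_if_coprime_quotient_card[OF fin chain assms(2)] assms(5,7) by blast
  then have "coordinate_sums n C = annihilator (coordinate_sums n C)"
    using self_dual_cyclic_code_coordinate_sums[OF C dual \<open>n > 0\<close>] by blast
  moreover have "ring_ideal (coordinate_sums n C)"
    using C ring_ideal_coordinate_sums unfolding cyclic_code_def by blast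
  ultimately show False
    using chain_ring_odd_index_no_self_annihilating_ideal[OF chain assms(2)] by blast
qed

end
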